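(* Let $\mathbb F\in\{\mathbb R,\mathbb C\}$ and $A,B\in M_n(\mathbb F)$ with $\|A+B\|_2<\|A\|_2+\|B\|_2$. Then $\mathcal M_{\mathbb F}(\exp(A)\exp(B))<\|A\|_2+\|B\|_2$.
   Context: $\|\cdot\|_2$ is the operator norm. For $\mathbb F\in\{\mathbb R,\mathbb C\}$ and $A\in M_n(\mathbb F)$, the Magnus exponent is $\mathcal M_{\mathbb F}(A)=\inf\{\sum_{i=1}^k\|B_i\|_2 : k\ge1,\ B_i\in M_n(\mathbb F),\ \exp(B_k)\cdots\exp(B_1)=A\}$. *)

theory Defs
  imports "HOL-Analysis.Analysis"
begin

text \<open>Square matrices over F (F = real or complex) are represented as 'a^'n^'n
  (n = CARD('n) arbitrary); the vector norm on 'a^'n is the Euclidean (l2) norm.\<close>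

definition opnorm2 :: "('a::real_normed_field)^'n^'n \<Rightarrow> real" where
  "opnorm2 A = onorm (\<lambda>x::'a^'n. A *v x)"

fun mpow :: "('a::semiring_1)^'n^'n \<Rightarrow> nat \<Rightarrow> 'a^'n^'n" where
  "mpow A 0 = mat 1"
| "mpow A (Suc k) = A ** mpow A k"

definition mexp :: "('a::real_normed_field)^'n^'n \<Rightarrow> 'a^'n^'n" where
  "mexp A = (\<Sum>k. (1 / fact k) *\<^sub>R mpow A k)"

text \<open>Product exp(B_k) ... exp(B_1) for the list [B_1, ..., B_k].\<close>
definition exp_prod :: "(('a::real_normed_field)^'n^'n) list \<Rightarrow> 'a^'n^'n" where
  "exp_prod Bs = fold (\<lambda>B P. mexp B ** P) Bs (mat 1)"

definition magnus :: "('a::real_normed_field)^'n^'n \<Rightarrow> real" where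
  "magnus A = Inf {sum_list (map opnorm2 Bs) | Bs. Bs \<noteq> [] \<and> exp_prod Bs = A}"

end

theory Submission
  imports Defs
begin

text \<open>Split \<open>exp A = exp ((1 - t) A) exp (t A)\<close> and \<open>exp B = exp (t B) exp ((1 - t) B)\<close>.
  For small \<open>t > 0\<close> the middle product \<open>exp (t A) exp (t B) = 1 + t (A + B) + O(t\<^sup>2)\<close> has a
  logarithm \<open>Z\<close>, found by the contraction mapping principle, with
  \<open>\<parallel>Z\<parallel> \<le> t \<parallel>A + B\<parallel> + O(t\<^sup>2)\<close>. Hence \<open>exp A exp B = exp ((1 - t) A) exp Z exp ((1 - t) B)\<close>
  is a product of exponentials of total norm \<open>(1 - t)(\<parallel>A\<parallel> + \<parallel>B\<parallel>) + t \<parallel>A + B\<parallel> + O(t\<^sup>2)\<close>,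
  which is below \<open>\<parallel>A\<parallel> + \<parallel>B\<parallel>\<close> for small \<open>t\<close>. This works in every Banach algebra, and
  the square matrices with the operator norm form one.\<close>

section \<open>Products of exponentials in Banach algebras\<close>

lemma exp_minus_one_minus_sums:
  fixes x :: "'a::{real_normed_algebra_1,banach}"
  shows "(\<lambda>n. x ^ (n + 2) /\<^sub>R fact (n + 2)) sums (exp x - 1 - x)"
proof -
  have "(\<lambda>n. x ^ (n + 2) /\<^sub>R fact (n + 2)) sums (exp x - (\<Sum>n<2. x ^ n /\<^sub>R fact n))"
    using exp_converges[of x] sums_iff_shift[where f = "\<lambda>n. x ^ n /\<^sub>R fact n" and n = 2]
    by simp
  then show ?thesis
    by (simp add: eval_nat_numeral algebra_simps)
qed

lemma norm_sums_le_geometric: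
  fixes f :: "nat \<Rightarrow> 'a::banach"
  assumes "f sums s" "0 \<le> q" "q < 1" "\<And>n. norm (f n) \<le> K * q ^ (n + 1)"
  shows "norm s \<le> K * q / (1 - q)"
proof -
  have geom: "(\<lambda>n. K * q ^ (n + 1)) sums (K * q / (1 - q))"
    using sums_mult[OF geometric_sums[of q], of "K * q"] assms(2,3)
    by (simp add: mult.assoc)
  have summable: "summable (\<lambda>n. norm (f n))"
    by (rule summable_comparison_test'[OF sums_summable[OF geom]]) (use assms(4) in simp)
  have "norm s = norm (\<Sum>n. f n)"
    using assms(1) by (simp add: sums_iff)
  also have "\<dots> \<le> (\<Sum>n. norm (f n))"
    by (rule summable_norm[OF summable])
  also have "\<dots> \<le> K * q / (1 - q)"
    by (rule sums_le[OF assms(4) summable_sums[OF summable] geom])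
  finally show ?thesis .
qed

lemma two_power_le_fact: "2 ^ (n + 1) \<le> (fact (n + 2) :: real)"
proof (induction n)
  case (Suc n)
  have "2 * 2 ^ (n + 1) \<le> real (n + 3) * fact (n + 2)"
    using Suc by (intro mult_mono) auto
  also have "\<dots> = fact (Suc n + 2)"
    by (simp add: eval_nat_numeral)
  finally show ?case
    by simp
qed (simp add: eval_nat_numeral)

lemma norm_exp_minus_one_minus_le:
  fixes x :: "'a::{real_normed_algebra_1,banach}"
  assumes "norm x \<le> 1"
  shows "norm (exp x - 1 - x) \<le> norm x ^ 2"
proof -
  have "norm (exp x - 1 - x) \<le> norm x ^ 2 * (1/2) / (1 - 1/2)"
  proof (rule norm_sums_le_geometric[OF exp_minus_one_minus_sums])
    fix n
    have "norm (x ^ (n + 2)) \<le> norm x ^ n * norm x ^ 2"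
      using norm_power_ineq[of x "n + 2"] by (simp only: power_add)
    also have "\<dots> \<le> norm x ^ 2"
      using assms by (simp add: mult_left_le_one_le power_le_one)
    finally have "norm (x ^ (n + 2)) \<le> norm x ^ 2" .
    have "norm (x ^ (n + 2) /\<^sub>R fact (n + 2)) = norm (x ^ (n + 2)) / fact (n + 2)"
      by (simp add: divide_inverse_commute)
    also have "\<dots> \<le> norm x ^ 2 / 2 ^ (n + 1)"
      using \<open>norm (x ^ (n + 2)) \<le> norm x ^ 2\<close> two_power_le_fact[of n] by (intro frac_le) auto
    also have "\<dots> = norm x ^ 2 * (1/2) ^ (n + 1)"
      by (simp add: power_divide)
    finally show "norm (x ^ (n + 2) /\<^sub>R fact (n + 2)) \<le> norm x ^ 2 * (1/2) ^ (n + 1)" .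
  qed auto
  then show ?thesis by simp
qed

lemma norm_power_diff_le:
  fixes x y :: "'a::real_normed_algebra_1"
  assumes "norm x \<le> r" "norm y \<le> r"
  shows "norm (x ^ Suc n - y ^ Suc n) \<le> real (Suc n) * r ^ n * norm (x - y)"
proof (induction n)
  case (Suc n)
  have "x ^ Suc (Suc n) - y ^ Suc (Suc n) = x * (x ^ Suc n - y ^ Suc n) + (x - y) * y ^ Suc n"
    by (simp add: algebra_simps)
  then have "norm (x ^ Suc (Suc n) - y ^ Suc (Suc n))
      \<le> norm x * norm (x ^ Suc n - y ^ Suc n) + norm (x - y) * norm (y ^ Suc n)"
    by (metis add_mono norm_mult_ineq norm_triangle_le)
  also have "\<dots> \<le> r * (real (Suc n) * r ^ n * norm (x - y)) + norm (x - y) * r ^ Suc n"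
  proof (intro add_mono mult_mono Suc.IH)
    show "norm (y ^ Suc n) \<le> r ^ Suc n"
      using norm_power_ineq[of y "Suc n"] power_mono[OF assms(2), of "Suc n"] by simp
  qed (use assms norm_ge_zero order_trans in blast)+
  also have "\<dots> = real (Suc (Suc n)) * r ^ Suc n * norm (x - y)"
    by (simp add: algebra_simps)
  finally show ?case .
qed simp

lemma norm_exp_minus_one_minus_diff_le:
  fixes x y :: "'a::{real_normed_algebra_1,banach}"
  assumes "norm x \<le> 1/4" "norm y \<le> 1/4"
  shows "norm ((exp x - 1 - x) - (exp y - 1 - y)) \<le> norm (x - y) / 3"
proof -
  have "norm ((exp x - 1 - x) - (exp y - 1 - y)) \<le> norm (x - y) * (1/4) / (1 - 1/4)"
  proof (rule norm_sums_le_geometric)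
    show "(\<lambda>n. (x ^ (n + 2) - y ^ (n + 2)) /\<^sub>R fact (n + 2)) sums ((exp x - 1 - x) - (exp y - 1 - y))"
      using sums_diff[OF exp_minus_one_minus_sums[of x] exp_minus_one_minus_sums[of y]]
      by (simp add: scaleR_diff_right)
    fix n
    have "real (n + 2) \<le> fact (n + 2)"
      by (metis fact_ge_self of_nat_fact of_nat_le_iff)
    have "norm ((x ^ (n + 2) - y ^ (n + 2)) /\<^sub>R fact (n + 2))
        = norm (x ^ Suc (n + 1) - y ^ Suc (n + 1)) / fact (n + 2)"
      by (simp add: divide_inverse_commute)
    also have "\<dots> \<le> (real (n + 2) * (1/4) ^ (n + 1) * norm (x - y)) / fact (n + 2)"
      using norm_power_diff_le[OF assms, of "n + 1"] by (intro divide_right_mono) auto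
    also have "\<dots> \<le> (fact (n + 2) * (1/4) ^ (n + 1) * norm (x - y)) / fact (n + 2)"
      using \<open>real (n + 2) \<le> fact (n + 2)\<close> by (intro divide_right_mono mult_right_mono) auto
    also have "\<dots> = norm (x - y) * (1/4) ^ (n + 1)"
      by simp
    finally show "norm ((x ^ (n + 2) - y ^ (n + 2)) /\<^sub>R fact (n + 2)) \<le> norm (x - y) * (1/4) ^ (n + 1)" .
  qed auto
  then show ?thesis
    by simp
qed

lemma ex_exp_eq_one_plus:
  fixes X :: "'a::{real_normed_algebra_1,banach}"
  assumes "norm X \<le> 1/8"
  shows "\<exists>Z. exp Z = 1 + X \<and> norm Z \<le> norm X + 4 * norm X ^ 2"
proof -
  define r where "r = norm X"
  define f where "f = (\<lambda>Z. X - (exp Z - 1 - Z))"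
  have "r * r \<le> r * (1/8)"
    using assms by (intro mult_left_mono) (auto simp: r_def)
  then have "4 * r ^ 2 \<le> r"
    unfolding power2_eq_square r_def using norm_ge_zero[of X] by linarith
  have small: "norm Z \<le> 1/4" if "Z \<in> cball 0 (2 * r)" for Z
    using that assms by (simp add: r_def)
  have norm_f: "norm (f Z) \<le> r + 4 * r ^ 2" if "Z \<in> cball 0 (2 * r)" for Z
  proof -
    have "norm (f Z) \<le> r + norm Z ^ 2"
      using norm_triangle_ineq4[of X "exp Z - 1 - Z"] norm_exp_minus_one_minus_le[of Z] small[OF that]
      by (simp add: f_def r_def)
    moreover have "norm Z ^ 2 \<le> (2 * r) ^ 2"
      using that by (intro power_mono) auto
    ultimately show ?thesis
      by (simp add: power_mult_distrib)
  qed
  have "\<exists>!Z\<in>cball 0 (2 * r). f Z = Z"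
  proof (rule Banach_fix[where c = "1/3"])
    show "f ` cball 0 (2 * r) \<subseteq> cball 0 (2 * r)"
      using norm_f \<open>4 * r ^ 2 \<le> r\<close> by fastforce
    show "dist (f x) (f y) \<le> 1/3 * dist x y" if "x \<in> cball 0 (2 * r)" "y \<in> cball 0 (2 * r)" for x y
      using norm_exp_minus_one_minus_diff_le[OF small[OF that(2)] small[OF that(1)]]
      by (simp add: f_def dist_norm norm_minus_commute algebra_simps)
  qed (auto simp: complete_eq_closed r_def)
  then obtain Z where Z: "Z \<in> cball 0 (2 * r)" "f Z = Z"
    by blast
  then have "exp Z = 1 + X"
    by (simp add: f_def algebra_simps)
  moreover have "norm Z \<le> r + 4 * r ^ 2"
    using norm_f[OF Z(1)] Z(2) by simp
  ultimately show ?thesis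
    by (auto simp: r_def)
qed

lemma norm_exp_mult_exp_minus_one_minus_le:
  fixes x y :: "'a::{real_normed_algebra_1,banach}"
  assumes "norm x \<le> 1" "norm y \<le> 1"
  shows "norm (exp x * exp y - 1 - (x + y)) \<le> norm x ^ 2 + norm y ^ 2 + 4 * norm x * norm y"
proof -
  define Rx where "Rx = exp x - 1 - x"
  define Ry where "Ry = exp y - 1 - y"
  have Rx: "norm Rx \<le> norm x ^ 2" and Ry: "norm Ry \<le> norm y ^ 2"
    using norm_exp_minus_one_minus_le assms by (auto simp: Rx_def Ry_def)
  have "norm x ^ 2 \<le> norm x" "norm y ^ 2 \<le> norm y"
    using assms by (simp_all add: power2_eq_square mult_left_le_one_le)
  then have "norm (x + Rx) \<le> 2 * norm x" "norm (y + Ry) \<le> 2 * norm y"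
    using Rx Ry norm_triangle_ineq[of x Rx] norm_triangle_ineq[of y Ry] by linarith+
  then have "norm ((x + Rx) * (y + Ry)) \<le> (2 * norm x) * (2 * norm y)"
    by (meson mult_mono norm_ge_zero norm_mult_ineq order_trans)
  moreover have "exp x * exp y - 1 - (x + y) = Rx + Ry + (x + Rx) * (y + Ry)"
    by (simp add: Rx_def Ry_def algebra_simps)
  ultimately show ?thesis
    using Rx Ry norm_triangle_ineq[of "Rx + Ry" "(x + Rx) * (y + Ry)"] norm_triangle_ineq[of Rx Ry]
    by simp
qed

lemma ex_exp_eq_exp_mult_exp:
  fixes x y :: "'a::{real_normed_algebra_1,banach}"
  assumes "norm x \<le> 1" "norm y \<le> 1" "u \<le> 1/8"
    and u: "u = norm (x + y) + norm x ^ 2 + norm y ^ 2 + 4 * norm x * norm y"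
  obtains Z where "exp Z = exp x * exp y" "norm Z \<le> u + 4 * u ^ 2"
proof -
  define X where "X = exp x * exp y - 1"
  have "norm X \<le> norm (x + y) + norm (X - (x + y))"
    using norm_triangle_ineq2[of X "x + y"] by simp
  also have "\<dots> \<le> u"
    using norm_exp_mult_exp_minus_one_minus_le[OF assms(1,2)] by (simp add: X_def u)
  finally have "norm X \<le> u" .
  then obtain Z where Z: "exp Z = 1 + X" "norm Z \<le> norm X + 4 * norm X ^ 2"
    using ex_exp_eq_one_plus[of X] assms(3) by auto
  moreover have "norm X + 4 * norm X ^ 2 \<le> u + 4 * u ^ 2"
    using \<open>norm X \<le> u\<close> power_mono[OF \<open>norm X \<le> u\<close>, of 2] by simp
  ultimately show ?thesis
    using that by (simp add: X_def)
qed

lemma exp_scaleR_add: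
  fixes x :: "'a::{real_normed_algebra_1,banach}"
  shows "exp ((s + t) *\<^sub>R x) = exp (s *\<^sub>R x) * exp (t *\<^sub>R x)"
  by (simp add: scaleR_add_left exp_add_commuting)

lemma exp_mult_exp_eq_shorter_product:
  fixes A B :: "'a::{real_normed_algebra_1,banach}"
  assumes "norm (A + B) < norm A + norm B"
  obtains A' Z B' where "exp A * exp B = exp A' * exp Z * exp B'"
    and "norm A' + norm Z + norm B' < norm A + norm B"
proof -
  define a b c where "a = norm A" and "b = norm B" and "c = norm (A + B)"
  define K where "K = a ^ 2 + b ^ 2 + 4 * a * b"
  have "\<forall>\<^sub>F t in at_right 0. c + t * K + 4 * t * (c + t * K) ^ 2 < a + b"
    using assms by (intro order_tendstoD(2)[where y = c]) (auto intro!: tendsto_eq_intros simp: a_def b_def c_def)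
  moreover have "\<forall>\<^sub>F t in at_right 0. t < 1 \<and> t * a < 1 \<and> t * b < 1 \<and> t * c + t ^ 2 * K < 1/8"
    by (intro eventually_conj order_tendstoD(2)[where y = 0]) (auto intro!: tendsto_eq_intros)
  ultimately have "\<forall>\<^sub>F t in at_right 0. 0 < t \<and> t < 1 \<and> t * a < 1 \<and> t * b < 1 \<and> t * c + t ^ 2 * K < 1/8
      \<and> c + t * K + 4 * t * (c + t * K) ^ 2 < a + b"
    by (intro eventually_conj eventually_at_right_less) (auto elim: eventually_mono)
  then obtain t where t: "0 < t" "t < 1" "t * a < 1" "t * b < 1" "t * c + t ^ 2 * K < 1/8"
    and gain: "c + t * K + 4 * t * (c + t * K) ^ 2 < a + b"
    using eventually_happens'[OF trivial_limit_at_right_real] by blast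
  define u where "u = t * c + t ^ 2 * K"
  obtain Z where Z: "exp Z = exp (t *\<^sub>R A) * exp (t *\<^sub>R B)" "norm Z \<le> u + 4 * u ^ 2"
  proof (rule ex_exp_eq_exp_mult_exp)
    show "u = norm (t *\<^sub>R A + t *\<^sub>R B) + norm (t *\<^sub>R A) ^ 2 + norm (t *\<^sub>R B) ^ 2
        + 4 * norm (t *\<^sub>R A) * norm (t *\<^sub>R B)"
      using t(1) by (simp add: u_def K_def a_def b_def c_def power_mult_distrib power2_eq_square algebra_simps
          flip: scaleR_add_right)
  qed (use t in \<open>auto simp: u_def a_def b_def\<close>)
  have "norm Z \<le> t * (c + t * K + 4 * t * (c + t * K) ^ 2)"
    using Z(2) by (simp add: u_def power2_eq_square algebra_simps)
  also have "\<dots> < t * (a + b)"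
    using gain t(1) by simp
  finally have "(1 - t) * a + norm Z + (1 - t) * b < a + b"
    by (simp add: algebra_simps)
  moreover have "exp A * exp B = exp ((1 - t) *\<^sub>R A) * exp Z * exp ((1 - t) *\<^sub>R B)"
    using exp_scaleR_add[of "1 - t" t A] exp_scaleR_add[of t "1 - t" B]
    by (simp add: Z(1) mult.assoc)
  ultimately show ?thesis
    using that t(2) by (simp add: a_def b_def)
qed

section \<open>Square matrices with the operator norm\<close>

lemma matrix_vector_mult_axis_nth: "(A *v axis j (1::'a::semiring_1)) $ i = A $ i $ j"
  by (simp add: matrix_vector_mult_def axis_def if_distrib cong: if_cong)

lemma norm_axis_one: "norm (axis j (1::'a::real_normed_algebra_1)) = 1"
  by (simp add: norm_vec_def axis_def L2_set_def if_distrib if_distribR cong: if_cong)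

context
  fixes A B :: "'a::{real_normed_field,euclidean_space}^'n^'n"
begin

lemma opnorm2_nonneg: "0 \<le> opnorm2 A"
  unfolding opnorm2_def by (rule onorm_pos_le) simp

lemma norm_matrix_vector_mult_le_opnorm2: "norm (A *v x) \<le> opnorm2 A * norm x"
  unfolding opnorm2_def by (rule onorm) simp

lemma norm_entry_le_opnorm2: "norm (A $ i $ j) \<le> opnorm2 A"
  using norm_matrix_vector_mult_le_opnorm2[of "axis j 1"]
    Finite_Cartesian_Product.norm_nth_le[of "A *v axis j 1" i]
  by (simp add: matrix_vector_mult_axis_nth norm_axis_one)

lemma norm_le_card_sq_opnorm2: "norm A \<le> real CARD('n) ^ 2 * opnorm2 A"
proof -
  have "norm A \<le> (\<Sum>i\<in>UNIV. norm (A $ i))"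
    unfolding norm_vec_def by (rule L2_set_le_sum) simp
  also have "\<dots> \<le> (\<Sum>i\<in>(UNIV::'n set). \<Sum>j\<in>(UNIV::'n set). opnorm2 A)"
    unfolding norm_vec_def by (intro sum_mono order_trans[OF L2_set_le_sum] norm_entry_le_opnorm2) simp
  finally show ?thesis
    by (simp add: power2_eq_square)
qed

lemma opnorm2_eq_0_iff: "opnorm2 A = 0 \<longleftrightarrow> A = 0"
proof
  assume "opnorm2 A = 0"
  then show "A = 0"
    using norm_entry_le_opnorm2 by (simp add: vec_eq_iff)
qed (simp add: opnorm2_def onorm_zero)

lemma opnorm2_triangle: "opnorm2 (A + B) \<le> opnorm2 A + opnorm2 B"
  using onorm_triangle[of "(*v) A" "(*v) B"]
  by (simp add: opnorm2_def matrix_vector_mult_add_rdistrib)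

lemma opnorm2_scaleR: "opnorm2 (c *\<^sub>R A) = \<bar>c\<bar> * opnorm2 A"
proof -
  have "(*v) (c *\<^sub>R A) = (\<lambda>x. c *\<^sub>R (A *v x))"
    by (simp add: fun_eq_iff matrix_vector_mult_def vec_eq_iff scaleR_sum_right)
  then show ?thesis
    unfolding opnorm2_def by (simp add: onorm_scaleR)
qed

lemma opnorm2_matrix_mult_le: "opnorm2 (A ** B) \<le> opnorm2 A * opnorm2 B"
  using onorm_compose[of "(*v) A" "(*v) B"]
  by (simp add: opnorm2_def o_def matrix_vector_mul_assoc)

end

lemma opnorm2_mat_1: "opnorm2 (mat 1 :: 'a::{real_normed_field,euclidean_space}^'n^'n) = 1"
  by (simp add: opnorm2_def onorm_id)

text \<open>On \<open>'a^'n^'n\<close> itself, \<open>*\<close> and \<open>norm\<close> are componentwise, so the matrix algebra with the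
  operator norm lives on a copy of that type.\<close>

typedef ('a::"{real_normed_field,euclidean_space}", 'n::finite) sqmat = "UNIV :: ('a^'n^'n) set"
  by simp

setup_lifting type_definition_sqmat

instantiation sqmat :: ("{real_normed_field,euclidean_space}", finite) real_vector
begin
lift_definition zero_sqmat :: "('a,'b) sqmat" is "0 :: 'a^'b^'b" .
lift_definition plus_sqmat :: "('a,'b) sqmat \<Rightarrow> ('a,'b) sqmat \<Rightarrow> ('a,'b) sqmat" is "(+) :: 'a^'b^'b \<Rightarrow> _" .
lift_definition minus_sqmat :: "('a,'b) sqmat \<Rightarrow> ('a,'b) sqmat \<Rightarrow> ('a,'b) sqmat" is "(-) :: 'a^'b^'b \<Rightarrow> _" .
lift_definition uminus_sqmat :: "('a,'b) sqmat \<Rightarrow> ('a,'b) sqmat" is "uminus :: 'a^'b^'b \<Rightarrow> _" .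
lift_definition scaleR_sqmat :: "real \<Rightarrow> ('a,'b) sqmat \<Rightarrow> ('a,'b) sqmat" is "scaleR :: real \<Rightarrow> 'a^'b^'b \<Rightarrow> _" .
instance
  by standard (transfer, simp add: algebra_simps)+
end

instantiation sqmat :: ("{real_normed_field,euclidean_space}", finite) ring_1
begin
lift_definition one_sqmat :: "('a,'b) sqmat" is "mat 1 :: 'a^'b^'b" .
lift_definition times_sqmat :: "('a,'b) sqmat \<Rightarrow> ('a,'b) sqmat \<Rightarrow> ('a,'b) sqmat" is "(**) :: 'a^'b^'b \<Rightarrow> _" .
instance
proof
  fix a b c :: "('a,'b) sqmat"
  show "a * b * c = a * (b * c)"
    by transfer (simp add: matrix_mul_assoc)
  show "1 * a = a" "a * 1 = a"
    by (transfer, simp)+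
  show "(a + b) * c = a * c + b * c"
    by transfer (vector matrix_matrix_mult_def sum.distrib[symmetric] field_simps)
  show "a * (b + c) = a * b + a * c"
    by transfer (simp add: matrix_add_ldistrib)
  show "(0::('a,'b) sqmat) \<noteq> 1"
    by transfer (auto simp: vec_eq_iff mat_def)
qed
end

instance sqmat :: ("{real_normed_field,euclidean_space}", finite) real_algebra_1
  by standard (transfer, simp add: scalar_matrix_assoc matrix_scalar_ac)+

instantiation sqmat :: ("{real_normed_field,euclidean_space}", finite) real_normed_algebra_1
begin
lift_definition norm_sqmat :: "('a,'b) sqmat \<Rightarrow> real" is opnorm2 .
definition dist_sqmat :: "('a,'b) sqmat \<Rightarrow> ('a,'b) sqmat \<Rightarrow> real"
  where "dist_sqmat a b = norm (a - b)"
definition sgn_sqmat :: "('a,'b) sqmat \<Rightarrow> ('a,'b) sqmat"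
  where "sgn_sqmat a = inverse (norm a) *\<^sub>R a"
definition uniformity_sqmat :: "(('a,'b) sqmat \<times> ('a,'b) sqmat) filter"
  where "uniformity_sqmat = (INF e\<in>{0<..}. principal {(x, y). dist x y < e})"
definition open_sqmat :: "('a,'b) sqmat set \<Rightarrow> bool"
  where "open_sqmat S = (\<forall>x\<in>S. \<forall>\<^sub>F (x', y) in uniformity. x' = x \<longrightarrow> y \<in> S)"
instance
  by standard
    (simp_all add: dist_sqmat_def sgn_sqmat_def uniformity_sqmat_def open_sqmat_def,
     (transfer, simp add: opnorm2_eq_0_iff opnorm2_triangle opnorm2_scaleR opnorm2_mat_1
        opnorm2_matrix_mult_le)+)
end

lemma bounded_linear_Rep_sqmat: "bounded_linear Rep_sqmat"
proof
  fix x y :: "('a::{real_normed_field,euclidean_space},'n::finite) sqmat" and r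
  show "Rep_sqmat (x + y) = Rep_sqmat x + Rep_sqmat y" "Rep_sqmat (r *\<^sub>R x) = r *\<^sub>R Rep_sqmat x"
    by (transfer, simp)+
  show "\<exists>K. \<forall>x::('a,'n) sqmat. norm (Rep_sqmat x) \<le> norm x * K"
    by (rule exI[of _ "real CARD('n) ^ 2"], transfer) (metis norm_le_card_sq_opnorm2 mult.commute)
qed

lemma bounded_linear_Abs_sqmat: "bounded_linear Abs_sqmat"
proof -
  have "linear (Abs_sqmat :: 'a::{real_normed_field,euclidean_space}^'n^'n \<Rightarrow> ('a,'n) sqmat)"
    by (rule linearI) (simp_all add: plus_sqmat.abs_eq scaleR_sqmat.abs_eq)
  then show ?thesis
    by (simp add: linear_conv_bounded_linear)
qed

instance sqmat :: ("{real_normed_field,euclidean_space}", finite) banach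
proof
  fix X :: "nat \<Rightarrow> ('a,'b) sqmat"
  assume "Cauchy X"
  then obtain L where "(\<lambda>n. Rep_sqmat (X n)) \<longlonglongrightarrow> L"
    using bounded_linear.Cauchy[OF bounded_linear_Rep_sqmat] convergent_eq_Cauchy by blast
  then have "X \<longlonglongrightarrow> Abs_sqmat L"
    using bounded_linear.tendsto[OF bounded_linear_Abs_sqmat] by (fastforce simp: Rep_sqmat_inverse)
  then show "convergent X"
    by (auto simp: convergent_def)
qed

lemma Rep_sqmat_power: "Rep_sqmat (x ^ k) = mpow (Rep_sqmat x) k"
  by (induction k) (simp_all add: times_sqmat.rep_eq one_sqmat.rep_eq)

lemma mexp_Rep_sqmat: "mexp (Rep_sqmat x) = Rep_sqmat (exp x)"
proof -
  have "(\<lambda>k. Rep_sqmat (x ^ k /\<^sub>R fact k)) sums Rep_sqmat (exp x)"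
    by (rule bounded_linear.sums[OF bounded_linear_Rep_sqmat exp_converges])
  then have "(\<lambda>k. (1 / fact k) *\<^sub>R mpow (Rep_sqmat x) k) sums Rep_sqmat (exp x)"
    by (simp add: scaleR_sqmat.rep_eq Rep_sqmat_power divide_inverse)
  then show ?thesis
    unfolding mexp_def by (rule sums_unique[symmetric])
qed

lemma magnus_le_sum_list:
  fixes Bs :: "('a::{real_normed_field,euclidean_space}^'n^'n) list"
  assumes "Bs \<noteq> []" "exp_prod Bs = A"
  shows "magnus A \<le> sum_list (map opnorm2 Bs)"
  unfolding magnus_def
proof (rule cInf_lower)
  show "sum_list (map opnorm2 Bs) \<in> {sum_list (map opnorm2 Bs) |Bs. Bs \<noteq> [] \<and> exp_prod Bs = A}"
    using assms by blast
  show "bdd_below {sum_list (map opnorm2 Bs) |Bs. Bs \<noteq> [] \<and> exp_prod Bs = A}"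
    by (rule bdd_belowI[of _ 0]) (auto intro!: sum_list_nonneg simp: opnorm2_nonneg)
qed

lemma magnus_mexp_mult_mexp_less:
  fixes A B :: "'a::{real_normed_field,euclidean_space}^'n::finite^'n"
  assumes "opnorm2 (A + B) < opnorm2 A + opnorm2 B"
  shows "magnus (mexp A ** mexp B) < opnorm2 A + opnorm2 B"
proof -
  obtain A' Z B' :: "('a,'n) sqmat"
    where factor: "exp (Abs_sqmat A) * exp (Abs_sqmat B) = exp A' * exp Z * exp B'"
      and shorter: "norm A' + norm Z + norm B' < norm (Abs_sqmat A) + norm (Abs_sqmat B)"
    using exp_mult_exp_eq_shorter_product[of "Abs_sqmat A" "Abs_sqmat B"] assms
    by (auto simp: norm_sqmat.abs_eq plus_sqmat.abs_eq)
  let ?Bs = "[Rep_sqmat B', Rep_sqmat Z, Rep_sqmat A']"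
  have "exp_prod ?Bs = Rep_sqmat (exp A' * exp Z * exp B')"
    by (simp add: exp_prod_def mexp_Rep_sqmat times_sqmat.rep_eq matrix_mul_assoc)
  also have "\<dots> = mexp A ** mexp B"
    using mexp_Rep_sqmat[of "Abs_sqmat A"] mexp_Rep_sqmat[of "Abs_sqmat B"]
    by (simp flip: factor add: times_sqmat.rep_eq Abs_sqmat_inverse)
  finally have "magnus (mexp A ** mexp B) \<le> sum_list (map opnorm2 ?Bs)"
    by (intro magnus_le_sum_list) auto
  also have "\<dots> < opnorm2 A + opnorm2 B"
    using shorter by (simp add: norm_sqmat.rep_eq Abs_sqmat_inverse)
  finally show ?thesis .
qed

theorem theorem5p2:
  fixes A B :: "real^'n^'n" and C D :: "complex^'n^'n"
  shows "(opnorm2 (A + B) < opnorm2 A + opnorm2 B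
            \<longrightarrow> magnus (mexp A ** mexp B) < opnorm2 A + opnorm2 B)
       \<and> (opnorm2 (C + D) < opnorm2 C + opnorm2 D
            \<longrightarrow> magnus (mexp C ** mexp D) < opnorm2 C + opnorm2 D)"
  using magnus_mexp_mult_mexp_less[of A B] magnus_mexp_mult_mexp_less[of C D] by blast

end
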